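(* Let $\sigma_1=\sigma_x,\sigma_2=\sigma_y,\sigma_3=\sigma_z$ and, for $\underline{\lambda}\in\mathbb{R}^3$, $U_{\underline{\lambda}}=\exp\{-i\sum_{j=1}^3\lambda_j\,\sigma_j\otimes\sigma_j\}$. Let the probe be $|\psi_0\rangle=(\alpha,\ \beta e^{i\phi_\beta},\ \gamma e^{i\phi_\gamma},\ \delta e^{i\phi_\delta})^T$ in the computational basis $\{|00\rangle,|01\rangle,|10\rangle,|11\rangle\}$, with $\alpha,\beta,\gamma,\delta\in[0,1]$, $\alpha^2+\beta^2+\gamma^2+\delta^2=1$, $\phi_\beta,\phi_\gamma,\phi_\delta\in[0,2\pi)$, and let $Q$ be the quantum Fisher information matrix of the model $\underline{\lambda}\mapsto U_{\underline{\lambda}}|\psi_0\rangle$. Then $$\mathrm{Det}[Q]=1024\left[\alpha^4+\delta^4-2\alpha^2\delta^2\cos 2\phi_\delta\right]\left[\beta^4+\gamma^4-2\beta^2\gamma^2\cos\big(2(\phi_\beta-\phi_\gamma)\big)\right],$$ and, whenever $Q$ is invertible, $$\mathrm{Tr}[Q^{-1}]=\frac{3}{16}\left(\frac{\alpha^2+\delta^2}{\alpha^4-2\alpha^2\delta^2\cos 2\phi_\delta+\delta^4}+\frac{\beta^2+\gamma^2}{\beta^4-2\beta^2\gamma^2\cos\big(2(\phi_\beta-\phi_\gamma)\big)+\gamma^4}\right).$$ In particular both quantities are independent of $\underline{\lambda}$.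
   Context: For a pure-state model $\underline{\lambda}\mapsto|\psi_{\underline{\lambda}}\rangle$, with $\partial_j=\partial/\partial\lambda_j$, the quantum Fisher information matrix is $Q_{jk}=4\,\mathrm{Re}\big[\langle\partial_j\psi|\partial_k\psi\rangle-\langle\partial_j\psi|\psi\rangle\langle\psi|\partial_k\psi\rangle\big]$, $j,k\in\{1,2,3\}$. *)

theory Defs
  imports "HOL-Analysis.Analysis"
begin

fun mpow :: "complex^'n^'n \<Rightarrow> nat \<Rightarrow> complex^'n^'n" where
  "mpow A 0 = mat 1"
| "mpow A (Suc n) = A ** mpow A n"

definition mexp :: "complex^'n^'n \<Rightarrow> complex^'n^'n" where
  "mexp A = (\<Sum>n. (1 / fact n) *\<^sub>R mpow A n)"

text \<open>Pauli matrices, basis index 0 = |0>, 1 = |1>.\<close>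

definition sigma_x :: "complex^2^2" where
  "sigma_x = (\<chi> i j. if i = j then 0 else 1)"

definition sigma_y :: "complex^2^2" where
  "sigma_y = (\<chi> i j. if i = j then 0 else if i = 0 then - \<i> else \<i>)"

definition sigma_z :: "complex^2^2" where
  "sigma_z = (\<chi> i j. if i \<noteq> j then 0 else if i = 0 then 1 else -1)"

text \<open>sigma_1 = sigma_x, sigma_2 = sigma_y, sigma_3 = sigma_z (in type 3, the index 3 equals 0).\<close>

definition pauli :: "3 \<Rightarrow> complex^2^2" where
  "pauli j = (if j = 1 then sigma_x else if j = 2 then sigma_y else sigma_z)"

text \<open>Two-qubit computational basis |00>,|01>,|10>,|11> is indexed by 0,1,2,3 :: 4;
  first (high) qubit and second (low) qubit of an index.\<close>

definition qhi :: "4 \<Rightarrow> 2" where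
  "qhi i = (if i = 0 \<or> i = 1 then 0 else 1)"

definition qlo :: "4 \<Rightarrow> 2" where
  "qlo i = (if i = 0 \<or> i = 2 then 0 else 1)"

definition kron :: "complex^2^2 \<Rightarrow> complex^2^2 \<Rightarrow> complex^4^4" where
  "kron A B = (\<chi> i j. A $ qhi i $ qhi j * B $ qlo i $ qlo j)"

definition hamil :: "real^3 \<Rightarrow> complex^4^4" where
  "hamil lam = (\<chi> a b. \<Sum>j\<in>UNIV. complex_of_real (lam $ j) * kron (pauli j) (pauli j) $ a $ b)"

definition Uop :: "real^3 \<Rightarrow> complex^4^4" where
  "Uop lam = mexp (\<chi> a b. - \<i> * hamil lam $ a $ b)"

definition probe :: "real \<Rightarrow> real \<Rightarrow> real \<Rightarrow> real \<Rightarrow> real \<Rightarrow> real \<Rightarrow> real \<Rightarrow> complex^4" where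
  "probe \<alpha> \<beta> \<gamma> \<delta> \<phi>\<beta> \<phi>\<gamma> \<phi>\<delta> =
     (\<chi> i. if i = 0 then complex_of_real \<alpha>
           else if i = 1 then complex_of_real \<beta> * cis \<phi>\<beta>
           else if i = 2 then complex_of_real \<gamma> * cis \<phi>\<gamma>
           else complex_of_real \<delta> * cis \<phi>\<delta>)"

definition braket :: "complex^'n \<Rightarrow> complex^'n \<Rightarrow> complex" where
  "braket u v = (\<Sum>i\<in>UNIV. cnj (u $ i) * v $ i)"

definition pderiv_state :: "(real^3 \<Rightarrow> complex^'n) \<Rightarrow> 3 \<Rightarrow> real^3 \<Rightarrow> complex^'n" where
  "pderiv_state psi j lam = vector_derivative (\<lambda>t. psi (lam + t *\<^sub>R axis j 1)) (at 0)"

definition QFIM :: "(real^3 \<Rightarrow> complex^'n) \<Rightarrow> real^3 \<Rightarrow> real^3^3" where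
  "QFIM psi lam = (\<chi> j k. 4 * Re (braket (pderiv_state psi j lam) (pderiv_state psi k lam)
      - braket (pderiv_state psi j lam) (psi lam) * braket (psi lam) (pderiv_state psi k lam)))"

end

theory Submission
  imports Defs
begin

(* The three commuting generators sigma_j (x) sigma_j are simultaneously diagonal in the Bell
   basis, sigma_j (x) sigma_j acting on the m-th Bell state as a sign s_j(m).  Hence U_lambda only
   imprints the phases exp(-i lambda . s(m)) on the Bell components of the probe, and Q is 4 times
   the covariance matrix of the sign vector s under the Bell populations p_m = |<B_m|psi_0>|^2,
   which do not depend on lambda.  The four vectors (1, s(m)) are the columns of a Hadamard
   matrix; this gives det Q = 64 * 256 * p_0 p_1 p_2 p_3 and tr Q^-1 = 3/64 * sum_m 1/p_m, and
   4 p_0 p_1, 4 p_2 p_3 are exactly the two brackets of the theorem. *)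

lemma sums_vec:
  fixes f :: "nat \<Rightarrow> 'a::real_normed_vector^'n"
  assumes "\<And>i. (\<lambda>n. f n $ i) sums (l $ i)"
  shows "f sums l"
  using assms unfolding sums_def by (auto intro!: vec_tendstoI simp: sum_component)

lemma sums_matrix:
  fixes f :: "nat \<Rightarrow> 'a::real_normed_vector^'n^'m"
  assumes "\<And>i j. (\<lambda>n. f n $ i $ j) sums (l $ i $ j)"
  shows "f sums l"
  using assms by (intro sums_vec) blast

lemma det_scaleR: "det (c *\<^sub>R A) = c ^ CARD('n) * det (A :: real^'n^'n)"
proof -
  have "det (c *\<^sub>R mat 1 :: real^'n^'n) = c ^ CARD('n)"
    by (subst det_diagonal) (simp_all add: mat_def)
  moreover have "c *\<^sub>R A = (c *\<^sub>R mat 1) ** A"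
    by (simp flip: scalar_matrix_assoc)
  ultimately show ?thesis
    by (simp add: det_mul)
qed

lemma trace_scaleR: "trace (c *\<^sub>R A) = c * trace (A :: real^'n^'n)"
  by (simp add: trace_def sum_distrib_left)

lemma matrix_inv_eqI:
  fixes A B :: "'a::field^'n^'n"
  assumes "A ** B = mat 1"
  shows "matrix_inv A = B"
  unfolding matrix_inv_def
proof (rule some_equality)
  show "A ** B = mat 1 \<and> B ** A = mat 1"
    using assms matrix_left_right_inverse by blast
next
  fix B' assume "A ** B' = mat 1 \<and> B' ** A = mat 1"
  then show "B' = B"
    by (metis assms matrix_mul_assoc matrix_mul_lid matrix_mul_rid)
qed

lemma matrix_inv_right: "invertible A \<Longrightarrow> A ** matrix_inv A = mat 1"
  unfolding invertible_def matrix_inv_def by (rule someI_ex[THEN conjunct1])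

lemma matrix_inv_scaleR:
  fixes A :: "real^'n^'n"
  assumes "invertible A" and "c \<noteq> 0"
  shows "matrix_inv (c *\<^sub>R A) = inverse c *\<^sub>R matrix_inv A"
  by (rule matrix_inv_eqI)
    (simp add: assms matrix_inv_right matrix_scalar_ac flip: scalar_matrix_assoc)

definition orthonormal_family :: "('m::finite \<Rightarrow> complex^'n) \<Rightarrow> bool" where
  "orthonormal_family e \<longleftrightarrow> (\<forall>m l. braket (e m) (e l) = (if m = l then 1 else 0))"

definition spectral_matrix :: "('m::finite \<Rightarrow> complex^'n) \<Rightarrow> ('m \<Rightarrow> complex) \<Rightarrow> complex^'n^'n" where
  "spectral_matrix e c = (\<chi> a b. \<Sum>m\<in>UNIV. c m * e m $ a * cnj (e m $ b))"

lemma orthonormal_familyD: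
  "orthonormal_family e \<Longrightarrow> braket (e m) (e l) = (if m = l then 1 else 0)"
  unfolding orthonormal_family_def by blast

lemma spectral_matrix_mult:
  assumes "orthonormal_family e"
  shows "spectral_matrix e c ** spectral_matrix e d = spectral_matrix e (\<lambda>m. c m * d m)"
proof -
  have "(spectral_matrix e c ** spectral_matrix e d) $ a $ b = spectral_matrix e (\<lambda>m. c m * d m) $ a $ b"
    for a b
  proof -
    have "(spectral_matrix e c ** spectral_matrix e d) $ a $ b
        = (\<Sum>k\<in>UNIV. \<Sum>m\<in>UNIV. \<Sum>l\<in>UNIV.
             c m * d l * e m $ a * cnj (e l $ b) * (cnj (e m $ k) * e l $ k))"
      unfolding matrix_matrix_mult_def spectral_matrix_def by (simp add: sum_product ac_simps)
    also have "\<dots> = (\<Sum>m\<in>UNIV. \<Sum>l\<in>UNIV. c m * d l * e m $ a * cnj (e l $ b) * braket (e m) (e l))"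
      unfolding braket_def sum_distrib_left by (subst sum.swap) (rule sum.cong[OF refl], rule sum.swap)
    also have "\<dots> = spectral_matrix e (\<lambda>m. c m * d m) $ a $ b"
      by (simp add: orthonormal_familyD[OF assms] spectral_matrix_def if_distrib cong: if_cong)
    finally show ?thesis .
  qed
  then show ?thesis
    by (simp add: vec_eq_iff)
qed

lemma mpow_spectral_matrix:
  assumes "orthonormal_family e" and "spectral_matrix e (\<lambda>_. 1) = mat 1"
  shows "mpow (spectral_matrix e c) n = spectral_matrix e (\<lambda>m. c m ^ n)"
  by (induction n) (simp_all add: assms spectral_matrix_mult)

lemma mexp_spectral_matrix:
  assumes "orthonormal_family e" and "spectral_matrix e (\<lambda>_. 1) = mat 1"
  shows "mexp (spectral_matrix e c) = spectral_matrix e (\<lambda>m. exp (c m))"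
proof -
  have "(\<lambda>n. \<Sum>m\<in>UNIV. (c m ^ n /\<^sub>R fact n) * (e m $ a * cnj (e m $ b)))
      sums (\<Sum>m\<in>UNIV. exp (c m) * (e m $ a * cnj (e m $ b)))" for a b
    by (intro sums_sum sums_mult2 exp_converges)
  then have entry: "(\<lambda>n. ((1 / fact n) *\<^sub>R mpow (spectral_matrix e c) n) $ a $ b)
      sums (spectral_matrix e (\<lambda>m. exp (c m)) $ a $ b)" for a b
    unfolding mpow_spectral_matrix[OF assms]
    by (simp add: spectral_matrix_def scaleR_sum_right divide_inverse_commute mult.assoc)
  show ?thesis
    unfolding mexp_def by (rule sums_unique[symmetric], rule sums_matrix, rule entry)
qed

lemma spectral_matrix_mult_vec:
  "spectral_matrix e c *v v = (\<Sum>m\<in>UNIV. (c m * braket (e m) v) *s e m)"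
  by (simp add: vec_eq_iff spectral_matrix_def matrix_vector_mult_def braket_def sum_component
      sum_distrib_left sum_distrib_right ac_simps) (subst sum.swap, simp)

lemma braket_sum_left: "braket (\<Sum>m\<in>A. u m) v = (\<Sum>m\<in>A. braket (u m) v)"
  unfolding braket_def by (simp add: sum_component sum_distrib_right) (rule sum.swap)

lemma braket_sum_right: "braket u (\<Sum>m\<in>A. v m) = (\<Sum>m\<in>A. braket u (v m))"
  unfolding braket_def by (simp add: sum_component sum_distrib_left) (rule sum.swap)

lemma braket_smult_left: "braket (c *s u) v = cnj c * braket u v"
  unfolding braket_def by (simp add: sum_distrib_left ac_simps)

lemma braket_smult_right: "braket u (c *s v) = c * braket u v"
  unfolding braket_def by (simp add: sum_distrib_left ac_simps)

lemma braket_orthonormal_sum: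
  assumes "orthonormal_family e"
  shows "braket (\<Sum>m\<in>UNIV. x m *s e m) (\<Sum>m\<in>UNIV. y m *s e m) = (\<Sum>m\<in>UNIV. cnj (x m) * y m)"
  by (simp add: braket_sum_left braket_sum_right braket_smult_left braket_smult_right
      orthonormal_familyD[OF assms] if_distrib cong: if_cong) (simp add: mult.commute)

definition phase_model ::
  "('m::finite \<Rightarrow> complex^'n) \<Rightarrow> ('m \<Rightarrow> real^3) \<Rightarrow> ('m \<Rightarrow> complex) \<Rightarrow> real^3 \<Rightarrow> complex^'n" where
  "phase_model e s c l = (\<Sum>m\<in>UNIV. (exp (- \<i> * of_real (l \<bullet> s m)) * c m) *s e m)"

definition covariance_matrix :: "('m::finite \<Rightarrow> real^'j) \<Rightarrow> ('m \<Rightarrow> real) \<Rightarrow> real^'j^'j" where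
  "covariance_matrix s p = (\<chi> j k. (\<Sum>m\<in>UNIV. p m * s m $ j * s m $ k)
      - (\<Sum>m\<in>UNIV. p m * s m $ j) * (\<Sum>m\<in>UNIV. p m * s m $ k))"

lemma bounded_linear_vector_scalar_mult_left: "bounded_linear (\<lambda>z::complex. z *s v)"
proof -
  have "linear (\<lambda>z::complex. z *s v)"
    by (rule linearI) (simp_all add: vec_eq_iff distrib_right)
  then show ?thesis
    by (simp add: linear_conv_bounded_linear)
qed

lemma has_vector_derivative_phase:
  "((\<lambda>t. exp (- \<i> * of_real (r + t * a))) has_vector_derivative
     - \<i> * of_real a * exp (- \<i> * of_real r)) (at 0)"
proof -
  have "((\<lambda>z. exp (- \<i> * (of_real r + z * of_real a))) has_field_derivative
      exp (- \<i> * (of_real r + of_real 0 * of_real a)) * (- \<i> * (0 + 1 * of_real a))) (at (of_real 0))"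
    by (auto intro!: derivative_eq_intros)
  from has_vector_derivative_real_field[OF this]
  show ?thesis
    by (simp add: algebra_simps)
qed

lemma pderiv_phase_model:
  "pderiv_state (phase_model e s c) j lam
     = (\<Sum>m\<in>UNIV. (- \<i> * of_real (s m $ j) * exp (- \<i> * of_real (lam \<bullet> s m)) * c m) *s e m)"
proof -
  have shift: "(lam + t *\<^sub>R axis j 1) \<bullet> s m = lam \<bullet> s m + t * s m $ j" for t m
    by (simp add: inner_add_left inner_axis')
  show ?thesis
    unfolding pderiv_state_def phase_model_def shift
    by (intro vector_derivative_at has_vector_derivative_sum
        bounded_linear.has_vector_derivative[OF bounded_linear_vector_scalar_mult_left]
        has_vector_derivative_mult_left has_vector_derivative_phase)
qed

lemma QFIM_phase_model:
  assumes "orthonormal_family e"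
  shows "QFIM (phase_model e s c) lam = 4 *\<^sub>R covariance_matrix s (\<lambda>m. (cmod (c m))\<^sup>2)"
proof -
  define w where "w m = exp (- \<i> * of_real (lam \<bullet> s m)) * c m" for m
  define p where "p m = (cmod (c m))\<^sup>2" for m
  have w_sq: "cnj (w m) * w m = of_real (p m)" for m
  proof -
    have "cmod (w m) = cmod (c m)"
      unfolding w_def norm_mult using norm_exp_i_times[of "- (lam \<bullet> s m)"] by simp
    then show ?thesis
      using complex_norm_square[of "w m"] by (simp add: p_def mult.commute)
  qed
  have pair: "cnj (x * w m) * (y * w m) = cnj x * y * of_real (p m)"
    and left: "cnj (x * w m) * w m = cnj x * of_real (p m)"
    and right: "cnj (w m) * (y * w m) = y * of_real (p m)" for x y m
    by (simp_all add: mult_ac flip: w_sq)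
  have d: "pderiv_state (phase_model e s c) j lam = (\<Sum>m\<in>UNIV. (- \<i> * of_real (s m $ j) * w m) *s e m)" for j
    unfolding pderiv_phase_model w_def by (simp add: mult.assoc)
  have psi: "phase_model e s c lam = (\<Sum>m\<in>UNIV. w m *s e m)"
    unfolding phase_model_def w_def ..
  have "braket (pderiv_state (phase_model e s c) j lam) (pderiv_state (phase_model e s c) k lam)
      = of_real (\<Sum>m\<in>UNIV. p m * s m $ j * s m $ k)" for j k
    unfolding d braket_orthonormal_sum[OF assms] pair by (simp add: mult_ac)
  moreover have "braket (pderiv_state (phase_model e s c) j lam) (phase_model e s c lam)
      = \<i> * of_real (\<Sum>m\<in>UNIV. p m * s m $ j)" for j
    unfolding d psi braket_orthonormal_sum[OF assms] left by (simp add: sum_distrib_left mult_ac)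
  moreover have "braket (phase_model e s c lam) (pderiv_state (phase_model e s c) k lam)
      = - \<i> * of_real (\<Sum>m\<in>UNIV. p m * s m $ k)" for k
    unfolding d psi braket_orthonormal_sum[OF assms] right by (simp add: sum_distrib_left mult_ac)
  ultimately show ?thesis
    unfolding QFIM_def covariance_matrix_def p_def by (simp add: vec_eq_iff algebra_simps)
qed

(* The vectors (1, s m) are the columns of an N x N matrix H, N = CARD('m), with
   H^T H = H H^T = N I. *)
definition hadamard_columns :: "('m::finite \<Rightarrow> real^'j) \<Rightarrow> bool" where
  "hadamard_columns s \<longleftrightarrow>
     (\<forall>j. (\<Sum>m\<in>UNIV. s m $ j) = 0)
   \<and> (\<forall>j k. (\<Sum>m\<in>UNIV. s m $ j * s m $ k) = (if j = k then real CARD('m) else 0))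
   \<and> (\<forall>m n. s m \<bullet> s n = (if m = n then real CARD('m) else 0) - 1)"

lemma covariance_matrix_mult_column:
  fixes s :: "'m::finite \<Rightarrow> real^'j" and p :: "'m \<Rightarrow> real"
  assumes "hadamard_columns s" and "sum p UNIV = 1"
  shows "(\<Sum>k\<in>UNIV. covariance_matrix s p $ j $ k * s n $ k)
    = real CARD('m) * p n * (s n $ j - (\<Sum>m\<in>UNIV. p m * s m $ j))"
proof -
  define \<mu> where "\<mu> k = (\<Sum>m\<in>UNIV. p m * s m $ k)" for k
  have cols: "(\<Sum>k\<in>UNIV. s m $ k * s n $ k) = (if m = n then real CARD('m) else 0) - 1" for m
    using assms(1) by (simp add: hadamard_columns_def inner_vec_def)
  have second_moment: "(\<Sum>k\<in>UNIV. (\<Sum>m\<in>UNIV. p m * s m $ j * s m $ k) * s n $ k)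
      = (\<Sum>m\<in>UNIV. p m * s m $ j * (\<Sum>k\<in>UNIV. s m $ k * s n $ k))"
    unfolding sum_distrib_left sum_distrib_right by (subst sum.swap) (simp add: mult_ac)
  have mean: "(\<Sum>k\<in>UNIV. \<mu> k * s n $ k) = (\<Sum>m\<in>UNIV. p m * (\<Sum>k\<in>UNIV. s m $ k * s n $ k))"
    unfolding \<mu>_def sum_distrib_left sum_distrib_right by (subst sum.swap) (simp add: mult_ac)
  have "(\<Sum>k\<in>UNIV. covariance_matrix s p $ j $ k * s n $ k)
      = (\<Sum>k\<in>UNIV. (\<Sum>m\<in>UNIV. p m * s m $ j * s m $ k) * s n $ k) - \<mu> j * (\<Sum>k\<in>UNIV. \<mu> k * s n $ k)"
    by (simp add: covariance_matrix_def \<mu>_def[symmetric] left_diff_distrib sum_subtractf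
        sum_distrib_left mult.assoc)
  also have "\<dots> = real CARD('m) * p n * (s n $ j - \<mu> j)"
    unfolding second_moment mean cols right_diff_distrib sum_subtractf
    by (simp add: assms(2) \<mu>_def if_distrib cong: if_cong)
  finally show ?thesis
    unfolding \<mu>_def .
qed

(* With D = diag p, the covariance matrix is the Schur complement of the corner sum p = 1 of
   H D H^T; hence its inverse is the lower right block of (H D H^T)^-1 = H D^-1 H^T / N^2. *)
lemma matrix_inv_covariance_matrix:
  fixes s :: "'m::finite \<Rightarrow> real^'j" and p :: "'m \<Rightarrow> real"
  assumes s: "hadamard_columns s" and p: "sum p UNIV = 1" "\<And>m. p m \<noteq> 0"
  shows "matrix_inv (covariance_matrix s p)
    = (\<chi> j k. (\<Sum>m\<in>UNIV. s m $ j * s m $ k / p m) / (real CARD('m))\<^sup>2)"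
proof (rule matrix_inv_eqI)
  define N where "N = real CARD('m)"
  have "N \<noteq> 0"
    by (simp add: N_def)
  have "(covariance_matrix s p ** (\<chi> j k. (\<Sum>m\<in>UNIV. s m $ j * s m $ k / p m) / N\<^sup>2)) $ j $ l
      = (if j = l then 1 else 0)" for j l
  proof -
    have "(covariance_matrix s p ** (\<chi> j k. (\<Sum>m\<in>UNIV. s m $ j * s m $ k / p m) / N\<^sup>2)) $ j $ l
        = (\<Sum>m\<in>UNIV. s m $ l / p m * (\<Sum>k\<in>UNIV. covariance_matrix s p $ j $ k * s m $ k)) / N\<^sup>2"
      unfolding matrix_matrix_mult_def
      by (simp add: sum_divide_distrib sum_distrib_left sum_distrib_right mult_ac) (rule sum.swap)
    also have "\<dots> = (\<Sum>m\<in>UNIV. s m $ l * (s m $ j - (\<Sum>n\<in>UNIV. p n * s n $ j))) / N"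
      unfolding covariance_matrix_mult_column[OF s p(1)] N_def[symmetric]
      using p(2) \<open>N \<noteq> 0\<close> by (simp add: power2_eq_square sum_divide_distrib)
    also have "\<dots> = ((\<Sum>m\<in>UNIV. s m $ l * s m $ j)
        - (\<Sum>m\<in>UNIV. s m $ l) * (\<Sum>n\<in>UNIV. p n * s n $ j)) / N"
      by (simp add: right_diff_distrib sum_subtractf sum_distrib_right)
    also have "\<dots> = (if j = l then 1 else 0)"
      using s \<open>N \<noteq> 0\<close> by (simp add: hadamard_columns_def N_def)
    finally show ?thesis .
  qed
  then show "covariance_matrix s p ** (\<chi> j k. (\<Sum>m\<in>UNIV. s m $ j * s m $ k / p m) / N\<^sup>2) = mat 1"
    by (simp add: vec_eq_iff mat_def)
qed

lemma trace_matrix_inv_covariance_matrix: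
  fixes s :: "'m::finite \<Rightarrow> real^'j" and p :: "'m \<Rightarrow> real"
  assumes s: "hadamard_columns s" and p: "sum p UNIV = 1" "\<And>m. p m \<noteq> 0"
  shows "trace (matrix_inv (covariance_matrix s p))
    = (real CARD('m) - 1) / (real CARD('m))\<^sup>2 * (\<Sum>m\<in>UNIV. 1 / p m)"
proof -
  have "trace (matrix_inv (covariance_matrix s p)) = (\<Sum>m\<in>UNIV. (s m \<bullet> s m) / p m) / (real CARD('m))\<^sup>2"
    unfolding matrix_inv_covariance_matrix[OF s p] trace_def inner_vec_def
    by (simp add: sum_divide_distrib sum_distrib_right) (rule sum.swap)
  moreover have "(\<Sum>m\<in>UNIV. (real CARD('m) - 1) / p m) = (real CARD('m) - 1) * (\<Sum>m\<in>UNIV. 1 / p m)"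
    by (simp add: sum_distrib_left)
  ultimately show ?thesis
    using s by (simp add: hadamard_columns_def)
qed

lemma four_eq_zero: "(4 :: 4) = 0"
  by simp

lemma UNIV_4_eq: "(UNIV :: 4 set) = {0, 1, 2, 3}"
  unfolding UNIV_4 four_eq_zero by auto

lemma sum_UNIV_4: "sum f (UNIV :: 4 set) = f 0 + f 1 + f 2 + f 3"
  by (simp add: sum_4 four_eq_zero ac_simps)

(* bell_coeff m is sqrt 2 times the Bell state Phi+, Phi-, Psi+, Psi- for m = 0, 1, 2, 3,
   written in the basis |00>, |01>, |10>, |11>. *)
definition bell_coeff :: "4 \<Rightarrow> 4 \<Rightarrow> real" where
  "bell_coeff m a =
     (if m = 0 then (if a = 0 \<or> a = 3 then 1 else 0)
      else if m = 1 then (if a = 0 then 1 else if a = 3 then -1 else 0)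
      else if m = 2 then (if a = 1 \<or> a = 2 then 1 else 0)
      else (if a = 1 then 1 else if a = 2 then -1 else 0))"

definition bell :: "4 \<Rightarrow> complex^4" where
  "bell m = (\<chi> a. complex_of_real (bell_coeff m a / sqrt 2))"

definition bell_sign :: "4 \<Rightarrow> real^3" where
  "bell_sign m = (\<chi> j.
     if j = 1 then (if m = 0 \<or> m = 2 then 1 else -1)
     else if j = 2 then (if m = 1 \<or> m = 2 then 1 else -1)
     else (if m = 0 \<or> m = 1 then 1 else -1))"

lemma cnj_bell: "cnj (bell m $ a) = bell m $ a"
  by (simp add: bell_def)

lemma bell_mult_bell: "bell m $ a * bell l $ b = complex_of_real (bell_coeff m a * bell_coeff l b / 2)"
  by (simp add: bell_def flip: of_real_mult)

lemma orthonormal_bell: "orthonormal_family bell"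
  unfolding orthonormal_family_def forall_4
  by (simp add: braket_def cnj_bell bell_mult_bell sum_UNIV_4) (simp add: bell_coeff_def)

lemma spectral_matrix_bell_one: "spectral_matrix bell (\<lambda>_. 1) = mat 1"
  unfolding vec_eq_iff forall_4
  by (simp add: spectral_matrix_def mat_def cnj_bell bell_mult_bell sum_UNIV_4 mult.assoc)
    (simp add: bell_coeff_def)

lemma hadamard_columns_bell_sign: "hadamard_columns bell_sign"
  unfolding hadamard_columns_def forall_4 forall_3
  by (simp add: bell_sign_def sum_UNIV_4 sum_3 inner_vec_def)

lemma kron_pauli_pauli_spectral:
  "kron (pauli j) (pauli j) = spectral_matrix bell (\<lambda>m. of_real (bell_sign m $ j))"
proof -
  have "j = 1 \<or> j = 2 \<or> j = 3"
    using exhaust_3 by auto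
  then show ?thesis
    unfolding vec_eq_iff forall_4
    by (elim disjE) (simp_all add: spectral_matrix_def cnj_bell bell_mult_bell sum_UNIV_4 mult.assoc
        kron_def pauli_def sigma_x_def sigma_y_def sigma_z_def qhi_def qlo_def bell_coeff_def bell_sign_def)
qed

lemma hamil_spectral: "hamil lam = spectral_matrix bell (\<lambda>m. of_real (lam \<bullet> bell_sign m))"
  unfolding hamil_def kron_pauli_pauli_spectral
  by (simp add: vec_eq_iff spectral_matrix_def inner_vec_def sum_distrib_left sum_distrib_right mult_ac)
    (intro allI sum.swap)

lemma Uop_spectral: "Uop lam = spectral_matrix bell (\<lambda>m. exp (- \<i> * of_real (lam \<bullet> bell_sign m)))"
proof -
  have "(\<chi> a b. - \<i> * hamil lam $ a $ b) = spectral_matrix bell (\<lambda>m. - \<i> * of_real (lam \<bullet> bell_sign m))"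
    by (simp add: hamil_spectral spectral_matrix_def sum_distrib_left mult.assoc)
  then show ?thesis
    unfolding Uop_def by (simp add: mexp_spectral_matrix orthonormal_bell spectral_matrix_bell_one)
qed

lemma Uop_mult_vec_phase_model:
  "(\<lambda>l. Uop l *v v) = phase_model bell bell_sign (\<lambda>m. braket (bell m) v)"
  by (simp add: fun_eq_iff Uop_spectral spectral_matrix_mult_vec phase_model_def mult.assoc)

definition bell_population :: "complex^4 \<Rightarrow> 4 \<Rightarrow> real" where
  "bell_population v m = (cmod (braket (bell m) v))\<^sup>2"

lemma QFIM_Uop: "QFIM (\<lambda>l. Uop l *v v) lam = 4 *\<^sub>R covariance_matrix bell_sign (bell_population v)"
  unfolding Uop_mult_vec_phase_model bell_population_def
  by (rule QFIM_phase_model[OF orthonormal_bell])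

lemma det_covariance_matrix_bell_sign:
  assumes "sum p UNIV = 1"
  shows "det (covariance_matrix bell_sign p) = 256 * p 0 * p 1 * p 2 * p 3"
proof -
  have p3: "p 3 = 1 - p 0 - p 1 - p 2"
    using assms by (simp add: sum_UNIV_4)
  show ?thesis
    unfolding det_3 by (simp add: covariance_matrix_def bell_sign_def sum_UNIV_4 p3) algebra
qed

lemma QFIM_Uop_invertible_iff:
  assumes "sum (bell_population v) UNIV = 1"
  shows "invertible (QFIM (\<lambda>l. Uop l *v v) lam) \<longleftrightarrow> (\<forall>m. bell_population v m \<noteq> 0)"
proof -
  have "(\<forall>m. bell_population v m \<noteq> 0) \<longleftrightarrow> (\<forall>m \<in> {0, 1, 2, 3}. bell_population v m \<noteq> 0)"
    by (simp flip: UNIV_4_eq)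
  then show ?thesis
    unfolding invertible_det_nz QFIM_Uop det_scaleR
    using det_covariance_matrix_bell_sign[OF assms] by simp
qed

lemma det_QFIM_Uop:
  assumes "sum (bell_population v) UNIV = 1"
  shows "det (QFIM (\<lambda>l. Uop l *v v) lam)
    = 16384 * bell_population v 0 * bell_population v 1 * bell_population v 2 * bell_population v 3"
  using det_covariance_matrix_bell_sign[OF assms] by (simp add: QFIM_Uop det_scaleR)

lemma trace_matrix_inv_QFIM_Uop:
  assumes "sum (bell_population v) UNIV = 1" and "\<And>m. bell_population v m \<noteq> 0"
  shows "trace (matrix_inv (QFIM (\<lambda>l. Uop l *v v) lam))
    = 3 / 64 * (\<Sum>m\<in>UNIV. 1 / bell_population v m)"
proof -
  have "invertible (covariance_matrix bell_sign (bell_population v))"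
    using det_covariance_matrix_bell_sign[OF assms(1)] assms(2) by (simp add: invertible_det_nz)
  then show ?thesis
    unfolding QFIM_Uop
    by (simp add: matrix_inv_scaleR trace_scaleR
        trace_matrix_inv_covariance_matrix[OF hadamard_columns_bell_sign assms])
qed

lemma norm_braket_bell_squared:
  "(cmod (braket (bell m) v))\<^sup>2 = (cmod (\<Sum>a\<in>UNIV. of_real (bell_coeff m a) * v $ a))\<^sup>2 / 2"
proof -
  have "braket (bell m) v = (\<Sum>a\<in>UNIV. of_real (bell_coeff m a) * v $ a) / of_real (sqrt 2)"
    by (simp add: braket_def bell_def sum_divide_distrib)
  then show ?thesis
    by (simp add: norm_divide power_divide)
qed

lemma norm_sum_cis_squared:
  "(cmod (of_real a * cis x + of_real b * cis y))\<^sup>2 = a\<^sup>2 + b\<^sup>2 + 2 * a * b * cos (x - y)"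
proof -
  have sin_sq: "sin t * sin t = 1 - cos t * cos t" for t :: real
    using sin_squared_eq[of t] by (simp add: power2_eq_square)
  show ?thesis
    unfolding cmod_power2 by (simp add: power2_eq_square algebra_simps cos_diff sin_sq)
qed

lemma bell_populations_probe:
  fixes \<alpha> \<beta> \<gamma> \<delta> \<phi>\<beta> \<phi>\<gamma> \<phi>\<delta> :: real
  defines "p \<equiv> bell_population (probe \<alpha> \<beta> \<gamma> \<delta> \<phi>\<beta> \<phi>\<gamma> \<phi>\<delta>)"
  shows "p 0 + p 1 = \<alpha>\<^sup>2 + \<delta>\<^sup>2" and "p 2 + p 3 = \<beta>\<^sup>2 + \<gamma>\<^sup>2"
    and "4 * p 0 * p 1 = \<alpha>^4 - 2 * \<alpha>^2 * \<delta>^2 * cos (2 * \<phi>\<delta>) + \<delta>^4"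
    and "4 * p 2 * p 3 = \<beta>^4 - 2 * \<beta>^2 * \<gamma>^2 * cos (2 * (\<phi>\<beta> - \<phi>\<gamma>)) + \<gamma>^4"
proof -
  let ?v = "probe \<alpha> \<beta> \<gamma> \<delta> \<phi>\<beta> \<phi>\<gamma> \<phi>\<delta>"
  have "(\<Sum>a\<in>UNIV. of_real (bell_coeff 0 a) * ?v $ a) = of_real \<alpha> * cis 0 + of_real \<delta> * cis \<phi>\<delta>"
    and "(\<Sum>a\<in>UNIV. of_real (bell_coeff 1 a) * ?v $ a) = of_real \<alpha> * cis 0 + of_real (- \<delta>) * cis \<phi>\<delta>"
    and "(\<Sum>a\<in>UNIV. of_real (bell_coeff 2 a) * ?v $ a) = of_real \<beta> * cis \<phi>\<beta> + of_real \<gamma> * cis \<phi>\<gamma>"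
    and "(\<Sum>a\<in>UNIV. of_real (bell_coeff 3 a) * ?v $ a) = of_real \<beta> * cis \<phi>\<beta> + of_real (- \<gamma>) * cis \<phi>\<gamma>"
    by (simp_all add: probe_def bell_coeff_def sum_UNIV_4)
  then have p: "p 0 = (\<alpha>\<^sup>2 + \<delta>\<^sup>2 + 2 * \<alpha> * \<delta> * cos \<phi>\<delta>) / 2"
    "p 1 = (\<alpha>\<^sup>2 + \<delta>\<^sup>2 - 2 * \<alpha> * \<delta> * cos \<phi>\<delta>) / 2"
    "p 2 = (\<beta>\<^sup>2 + \<gamma>\<^sup>2 + 2 * \<beta> * \<gamma> * cos (\<phi>\<beta> - \<phi>\<gamma>)) / 2"
    "p 3 = (\<beta>\<^sup>2 + \<gamma>\<^sup>2 - 2 * \<beta> * \<gamma> * cos (\<phi>\<beta> - \<phi>\<gamma>)) / 2"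
    by (simp_all only: p_def bell_population_def norm_braket_bell_squared norm_sum_cis_squared) simp_all
  show "p 0 + p 1 = \<alpha>\<^sup>2 + \<delta>\<^sup>2" and "p 2 + p 3 = \<beta>\<^sup>2 + \<gamma>\<^sup>2"
    unfolding p by (simp_all add: field_simps)
  show "4 * p 0 * p 1 = \<alpha>^4 - 2 * \<alpha>^2 * \<delta>^2 * cos (2 * \<phi>\<delta>) + \<delta>^4"
    and "4 * p 2 * p 3 = \<beta>^4 - 2 * \<beta>^2 * \<gamma>^2 * cos (2 * (\<phi>\<beta> - \<phi>\<gamma>)) + \<gamma>^4"
    unfolding p cos_double_cos by (simp_all add: field_simps power2_eq_square power4_eq_xxxx)
qed

theorem mainTheorem2:
  fixes \<alpha> \<beta> \<gamma> \<delta> \<phi>\<beta> \<phi>\<gamma> \<phi>\<delta> :: real and lam :: "real^3"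
  assumes "\<alpha> \<in> {0..1}" "\<beta> \<in> {0..1}" "\<gamma> \<in> {0..1}" "\<delta> \<in> {0..1}"
    and "\<alpha>^2 + \<beta>^2 + \<gamma>^2 + \<delta>^2 = 1"
    and "\<phi>\<beta> \<in> {0..<2*pi}" "\<phi>\<gamma> \<in> {0..<2*pi}" "\<phi>\<delta> \<in> {0..<2*pi}"
  defines "Q \<equiv> QFIM (\<lambda>l. Uop l *v probe \<alpha> \<beta> \<gamma> \<delta> \<phi>\<beta> \<phi>\<gamma> \<phi>\<delta>) lam"
  shows "det Q = 1024 * (\<alpha>^4 + \<delta>^4 - 2 * \<alpha>^2 * \<delta>^2 * cos (2 * \<phi>\<delta>))
                      * (\<beta>^4 + \<gamma>^4 - 2 * \<beta>^2 * \<gamma>^2 * cos (2 * (\<phi>\<beta> - \<phi>\<gamma>)))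
       \<and> (invertible Q \<longrightarrow>
           trace (matrix_inv Q) = 3 / 16 *
             ((\<alpha>^2 + \<delta>^2) / (\<alpha>^4 - 2 * \<alpha>^2 * \<delta>^2 * cos (2 * \<phi>\<delta>) + \<delta>^4)
              + (\<beta>^2 + \<gamma>^2) / (\<beta>^4 - 2 * \<beta>^2 * \<gamma>^2 * cos (2 * (\<phi>\<beta> - \<phi>\<gamma>)) + \<gamma>^4)))"
proof -
  define v where "v = probe \<alpha> \<beta> \<gamma> \<delta> \<phi>\<beta> \<phi>\<gamma> \<phi>\<delta>"
  note pop = bell_populations_probe[of \<alpha> \<beta> \<gamma> \<delta> \<phi>\<beta> \<phi>\<gamma> \<phi>\<delta>, folded v_def]
  have sum_p: "sum (bell_population v) UNIV = 1"
    using assms(5) pop(1,2) by (simp add: sum_UNIV_4)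
  have "det Q = 1024 * (4 * bell_population v 0 * bell_population v 1)
      * (4 * bell_population v 2 * bell_population v 3)"
    unfolding Q_def v_def[symmetric] det_QFIM_Uop[OF sum_p] by simp
  moreover have "trace (matrix_inv Q) = 3 / 16 *
      ((bell_population v 0 + bell_population v 1) / (4 * bell_population v 0 * bell_population v 1)
     + (bell_population v 2 + bell_population v 3) / (4 * bell_population v 2 * bell_population v 3))"
    if "invertible Q"
  proof -
    have nonzero: "bell_population v m \<noteq> 0" for m
      using that unfolding Q_def v_def[symmetric] QFIM_Uop_invertible_iff[OF sum_p] by blast
    then show ?thesis
      unfolding Q_def v_def[symmetric] trace_matrix_inv_QFIM_Uop[OF sum_p nonzero]
      by (simp add: sum_UNIV_4 field_simps)
  qed
  ultimately show ?thesis
    unfolding pop by (simp add: algebra_simps)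
qed

end
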